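(* Let $n\ge 2$, let $G=K_n$ on vertices $v_1,\dots,v_n$ with edge weights $w_{\{i,j\}}\in(0,1)$, and let $\alpha\in(0,1)$. Then $\operatorname{cptw}(G,\alpha)=\left\lceil \log_{P_0}(1-\alpha)\right\rceil$, where $P_0=\min_{1\le i\le n}\prod_{j\ne i}(1-w_{\{i,j\}})$.
   Context: Let $G$ be a finite simple graph in which each edge $uv$ has a weight $w_{uv}\in(0,1)$. Weighted zero forcing: start with a set $B\subseteq V(G)$ of blue vertices, all other vertices white. In each round, simultaneously, for every blue vertex $u$ that has exactly one white neighbor $v$ (with respect to the coloring at the start of the round), $u$ attempts to force $v$, succeeding with probability $w_{uv}$, all attempts being independent; a white vertex becomes blue at the end of the round if at least one attempt on it succeeds. $B$ is a weighted zero forcing set of $G$ if this process can eventually color all of $V(G)$ blue (equivalently, $B$ is a zero forcing set of the underlying unweighted graph under the standard rule); $\operatorname{Z}(G)$ is the minimum size of such a set. $\operatorname{ptw}(G,B)$ is the random variable giving the round in which the last white vertex becomes blue ($0$ if $B=V(G)$). For $\alpha\in(0,1)$, $\operatorname{cptw}(G,B,\alpha)$ is the least $t\ge 0$ with $\Pr(\operatorname{ptw}(G,B)\le t)\ge\alpha$, and $\operatorname{cptw}(G,\alpha)$ is the minimum of $\operatorname{cptw}(G,B,\alpha)$ over weighted zero forcing sets $B$ with $|B|=\operatorname{Z}(G)$. *)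

theory Defs
  imports "HOL-Probability.Probability"
begin

text \<open>A finite simple graph is given by a finite vertex set V and a symmetric,
irreflexive adjacency relation E (only its restriction to V matters).
Edge weights are given by w :: 'a set => real, evaluated on 2-sets {u,v}.\<close>

definition nbrs :: "'a set \<Rightarrow> ('a \<Rightarrow> 'a \<Rightarrow> bool) \<Rightarrow> 'a \<Rightarrow> 'a set" where
  "nbrs V E u = {v \<in> V. E u v}"

inductive_set zf_closure :: "'a set \<Rightarrow> ('a \<Rightarrow> 'a \<Rightarrow> bool) \<Rightarrow> 'a set \<Rightarrow> 'a set"
  for V E B where
  base: "x \<in> B \<Longrightarrow> x \<in> zf_closure V E B"
| force: "\<lbrakk> u \<in> V; u \<in> zf_closure V E B; v \<in> nbrs V E u;
            \<forall>x \<in> nbrs V E u. x \<noteq> v \<longrightarrow> x \<in> zf_closure V E B \<rbrakk> \<Longrightarrow> v \<in> zf_closure V E B"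

definition zero_forcing_set :: "'a set \<Rightarrow> ('a \<Rightarrow> 'a \<Rightarrow> bool) \<Rightarrow> 'a set \<Rightarrow> bool" where
  "zero_forcing_set V E B \<longleftrightarrow> B \<subseteq> V \<and> V \<subseteq> zf_closure V E B"

definition Z_num :: "'a set \<Rightarrow> ('a \<Rightarrow> 'a \<Rightarrow> bool) \<Rightarrow> nat" where
  "Z_num V E = (LEAST k. \<exists>B. zero_forcing_set V E B \<and> card B = k)"

definition attempts :: "'a set \<Rightarrow> ('a \<Rightarrow> 'a \<Rightarrow> bool) \<Rightarrow> 'a set \<Rightarrow> ('a \<times> 'a) set" where
  "attempts V E S = {(u, v). u \<in> S \<and> u \<in> V \<and> nbrs V E u - S = {v}}"

text \<open>One round: every attempt (u,v) succeeds independently with probability w{u,v};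
a white vertex turns blue iff some attempt on it succeeds.\<close>
definition wzf_step :: "'a set \<Rightarrow> ('a \<Rightarrow> 'a \<Rightarrow> bool) \<Rightarrow> ('a set \<Rightarrow> real) \<Rightarrow> 'a set \<Rightarrow> 'a set pmf" where
  "wzf_step V E w S =
     map_pmf (\<lambda>succ. S \<union> {v. \<exists>u. (u, v) \<in> attempts V E S \<and> succ (u, v)})
       (Pi_pmf (attempts V E S) False (\<lambda>(u, v). bernoulli_pmf (w {u, v})))"

fun wzf_run :: "'a set \<Rightarrow> ('a \<Rightarrow> 'a \<Rightarrow> bool) \<Rightarrow> ('a set \<Rightarrow> real) \<Rightarrow> 'a set \<Rightarrow> nat \<Rightarrow> 'a set pmf" where
  "wzf_run V E w B 0 = return_pmf B"
| "wzf_run V E w B (Suc t) = bind_pmf (wzf_run V E w B t) (wzf_step V E w)"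

text \<open>Pr(ptw(G,B) <= t) = probability that all vertices are blue after t rounds.\<close>
definition prob_ptw_le :: "'a set \<Rightarrow> ('a \<Rightarrow> 'a \<Rightarrow> bool) \<Rightarrow> ('a set \<Rightarrow> real) \<Rightarrow> 'a set \<Rightarrow> nat \<Rightarrow> real" where
  "prob_ptw_le V E w B t = measure_pmf.prob (wzf_run V E w B t) {S. V \<subseteq> S}"

definition cptw_set :: "'a set \<Rightarrow> ('a \<Rightarrow> 'a \<Rightarrow> bool) \<Rightarrow> ('a set \<Rightarrow> real) \<Rightarrow> 'a set \<Rightarrow> real \<Rightarrow> nat" where
  "cptw_set V E w B \<alpha> = (LEAST t. prob_ptw_le V E w B t \<ge> \<alpha>)"

definition cptw :: "'a set \<Rightarrow> ('a \<Rightarrow> 'a \<Rightarrow> bool) \<Rightarrow> ('a set \<Rightarrow> real) \<Rightarrow> real \<Rightarrow> nat" where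
  "cptw V E w \<alpha> = Min {cptw_set V E w B \<alpha> | B. zero_forcing_set V E B \<and> card B = Z_num V E}"

definition K_adj :: "nat \<Rightarrow> nat \<Rightarrow> bool" where
  "K_adj i j \<longleftrightarrow> i \<noteq> j"

end

theory Submission
  imports Defs
begin

text \<open>In \<open>K_n\<close> a blue vertex sees every white vertex, so it can force only when a single
vertex is white; hence the minimum zero forcing sets are the sets \<open>V - {i}\<close>. Started from
\<open>V - {i}\<close>, all other vertices attempt to force \<open>i\<close> in every round, so \<open>i\<close> is still white
after \<open>t\<close> rounds with probability \<open>P i ^ t\<close>, where \<open>P i\<close> is the product of the \<open>1 - w {i, j}\<close>
over \<open>j \<noteq> i\<close>. Thus \<open>cptw_set\<close> of \<open>V - {i}\<close> is \<open>\<lceil>log (P i) (1 - \<alpha>)\<rceil>\<close>, which is increasing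
in \<open>P i \<in> (0, 1)\<close>, so the minimum over \<open>i\<close> is attained where \<open>P i\<close> is smallest.\<close>

lemma nbrs_K_adj: "nbrs V K_adj u = V - {u}"
  by (auto simp: nbrs_def K_adj_def)

lemma Diff_singleton_nonempty_if_card_ge_2:
  assumes "card V \<ge> 2"
  shows "V - {i} \<noteq> {}"
proof
  assume "V - {i} = {}"
  then have "card V \<le> card {i}"
    by (intro card_mono) auto
  with assms show False by simp
qed

lemma zf_closure_K_adj_subset:
  assumes "finite V" "card (V - B) \<ge> 2"
  shows "zf_closure V K_adj B \<subseteq> B"
proof
  fix x assume "x \<in> zf_closure V K_adj B"
  then show "x \<in> B"
  proof (induction rule: zf_closure.induct)
    case (force u v)
    have "\<not> V - B \<subseteq> {v}"
      using assms card_mono[of "{v}" "V - B"] by auto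
    then obtain c where c: "c \<in> V - B" "c \<noteq> v" by auto
    then have "c \<in> nbrs V K_adj u"
      using force by (auto simp: nbrs_K_adj)
    then show ?case using force c by auto
  qed
qed

lemma zero_forcing_set_K_adj_remove:
  assumes "i \<in> V" "card V \<ge> 2"
  shows "zero_forcing_set V K_adj (V - {i})"
  unfolding zero_forcing_set_def
proof (intro conjI subsetI)
  fix x assume x: "x \<in> V"
  obtain u where u: "u \<in> V" "u \<noteq> i"
    using Diff_singleton_nonempty_if_card_ge_2[OF assms(2), of i] by auto
  have "i \<in> zf_closure V K_adj (V - {i})"
    by (rule zf_closure.force[of u]) (use u assms in \<open>auto simp: nbrs_K_adj intro: zf_closure.base\<close>)
  then show "x \<in> zf_closure V K_adj (V - {i})"
    using x by (cases "x = i") (auto intro: zf_closure.base)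
qed auto

lemma card_Diff_le_1_if_zero_forcing_set_K_adj:
  assumes "finite V" "zero_forcing_set V K_adj B"
  shows "card (V - B) \<le> 1"
proof (rule ccontr)
  assume "\<not> ?thesis"
  then have "zf_closure V K_adj B \<subseteq> B"
    using assms(1) by (intro zf_closure_K_adj_subset) auto
  then have "V - B = {}"
    using assms(2) unfolding zero_forcing_set_def by blast
  with \<open>\<not> ?thesis\<close> show False by simp
qed

lemma Z_num_K_adj:
  assumes "finite V" "card V \<ge> 2"
  shows "Z_num V K_adj = card V - 1"
  unfolding Z_num_def
proof (rule Least_equality)
  obtain i where "i \<in> V"
    using assms by fastforce
  then show "\<exists>B. zero_forcing_set V K_adj B \<and> card B = card V - 1"
    using assms by (intro exI[of _ "V - {i}"]) (simp add: zero_forcing_set_K_adj_remove)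
next
  fix k assume "\<exists>B. zero_forcing_set V K_adj B \<and> card B = k"
  then obtain B where B: "zero_forcing_set V K_adj B" "card B = k" by auto
  then have "B \<subseteq> V" by (simp add: zero_forcing_set_def)
  then show "card V - 1 \<le> k"
    using card_Diff_le_1_if_zero_forcing_set_K_adj[OF assms(1) B(1)] B(2) assms(1)
    by (simp add: card_Diff_subset finite_subset)
qed

lemma minimum_zero_forcing_sets_K_adj:
  assumes "finite V" "card V \<ge> 2"
  shows "{B. zero_forcing_set V K_adj B \<and> card B = Z_num V K_adj} = (\<lambda>i. V - {i}) ` V"
proof (intro equalityI subsetI)
  fix B assume "B \<in> {B. zero_forcing_set V K_adj B \<and> card B = Z_num V K_adj}"
  then have B: "B \<subseteq> V" "card B = card V - 1"
    using Z_num_K_adj[OF assms] by (auto simp: zero_forcing_set_def)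
  then have "card (V - B) = 1"
    using assms by (simp add: card_Diff_subset finite_subset)
  then obtain i where "V - B = {i}" by (auto simp: card_Suc_eq)
  then show "B \<in> (\<lambda>i. V - {i}) ` V"
    using B(1) by (intro image_eqI[of _ _ i]) auto
next
  fix B assume "B \<in> (\<lambda>i. V - {i}) ` V"
  then obtain i where "i \<in> V" "B = V - {i}" by auto
  then show "B \<in> {B. zero_forcing_set V K_adj B \<and> card B = Z_num V K_adj}"
    using assms by (simp add: zero_forcing_set_K_adj_remove Z_num_K_adj)
qed

lemma attempts_K_adj_remove:
  assumes "i \<in> V"
  shows "attempts V K_adj (V - {i}) = (\<lambda>u. (u, i)) ` (V - {i})"
  using assms by (auto simp: attempts_def nbrs_K_adj)

lemma attempts_K_adj_all: "attempts V K_adj V = {}"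
  by (auto simp: attempts_def nbrs_K_adj)

lemma wzf_step_K_adj_all: "wzf_step V K_adj w V = return_pmf V"
  by (simp add: wzf_step_def attempts_K_adj_all)

lemma set_pmf_wzf_step_K_adj_remove:
  assumes "i \<in> V"
  shows "set_pmf (wzf_step V K_adj w (V - {i})) \<subseteq> {V - {i}, V}"
proof -
  let ?forced = "\<lambda>succ. {v. \<exists>u. (u, v) \<in> attempts V K_adj (V - {i}) \<and> succ (u, v)}"
  have "(V - {i}) \<union> ?forced succ \<in> {V - {i}, V}" for succ
  proof -
    have "?forced succ \<subseteq> {i}"
      using assms by (auto simp: attempts_K_adj_remove)
    then consider "?forced succ = {}" | "?forced succ = {i}"
      unfolding subset_singleton_iff by blast
    then show ?thesis
    proof cases
      case 1
      show ?thesis unfolding 1 by simp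
    next
      case 2
      show ?thesis unfolding 2 using assms by (simp add: insert_absorb)
    qed
  qed
  then show ?thesis unfolding wzf_step_def by auto
qed

lemma pmf_wzf_step_K_adj_remove:
  assumes "i \<in> V" "finite V"
    and w: "\<forall>u\<in>V - {i}. 0 \<le> w {i, u} \<and> w {i, u} \<le> 1"
  shows "pmf (wzf_step V K_adj w (V - {i})) (V - {i}) = (\<Prod>u\<in>V - {i}. 1 - w {i, u})"
proof -
  let ?A = "attempts V K_adj (V - {i})"
  let ?blue = "\<lambda>succ. (V - {i}) \<union> {v. \<exists>u. (u, v) \<in> ?A \<and> succ (u, v)}"
  have A: "?A = (\<lambda>u. (u, i)) ` (V - {i})"
    using assms(1) by (rule attempts_K_adj_remove)
  have all_fail: "?blue -` {V - {i}} = Pi ?A (\<lambda>_. {False})"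
    using assms(1) by (auto simp: A)
  have "pmf (wzf_step V K_adj w (V - {i})) (V - {i}) =
      measure_pmf.prob (Pi_pmf ?A False (\<lambda>(u, v). bernoulli_pmf (w {u, v}))) (?blue -` {V - {i}})"
    unfolding wzf_step_def by (simp add: pmf_map)
  also have "\<dots> = (\<Prod>a\<in>?A. measure_pmf.prob ((\<lambda>(u, v). bernoulli_pmf (w {u, v})) a) {False})"
    unfolding all_fail using assms(2) by (intro measure_Pi_pmf_Pi) (simp add: A)
  also have "\<dots> = (\<Prod>u\<in>V - {i}. measure_pmf.prob (bernoulli_pmf (w {u, i})) {False})"
    unfolding A by (subst prod.reindex) (auto simp: inj_on_def)
  also have "\<dots> = (\<Prod>u\<in>V - {i}. 1 - w {i, u})"
    using w by (intro prod.cong) (auto simp: measure_pmf_single insert_commute)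
  finally show ?thesis .
qed

lemma set_pmf_wzf_run_K_adj_remove:
  assumes "i \<in> V"
  shows "set_pmf (wzf_run V K_adj w (V - {i}) t) \<subseteq> {V - {i}, V}"
proof (induction t)
  case (Suc t)
  then show ?case
    using set_pmf_wzf_step_K_adj_remove[OF assms]
    by (fastforce simp: set_bind_pmf wzf_step_K_adj_all)
qed simp

lemma pmf_wzf_run_K_adj_remove:
  assumes "i \<in> V" "finite V"
    and w: "\<forall>u\<in>V - {i}. 0 \<le> w {i, u} \<and> w {i, u} \<le> 1"
  shows "pmf (wzf_run V K_adj w (V - {i}) t) (V - {i}) = (\<Prod>u\<in>V - {i}. 1 - w {i, u}) ^ t"
proof (induction t)
  case (Suc t)
  let ?p = "wzf_run V K_adj w (V - {i}) t"
  let ?step = "wzf_step V K_adj w"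
  have "pmf (bind_pmf ?p ?step) (V - {i}) = (\<integral>S. pmf (?step S) (V - {i}) \<partial>measure_pmf ?p)"
    by (rule pmf_bind)
  also have "\<dots> = (\<Sum>S\<in>{V - {i}, V}. pmf (?step S) (V - {i}) * pmf ?p S)"
    using set_pmf_wzf_run_K_adj_remove[OF assms(1)] by (intro integral_measure_pmf_real) auto
  also have "\<dots> = (\<Prod>u\<in>V - {i}. 1 - w {i, u}) * (\<Prod>u\<in>V - {i}. 1 - w {i, u}) ^ t"
  proof -
    have "V - {i} \<noteq> V" using assms(1) by blast
    then show ?thesis
      using Suc.IH pmf_wzf_step_K_adj_remove[OF assms] by (simp add: wzf_step_K_adj_all)
  qed
  finally show ?case by simp
qed simp

lemma prob_ptw_le_K_adj_remove:
  assumes "i \<in> V" "finite V"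
    and w: "\<forall>u\<in>V - {i}. 0 \<le> w {i, u} \<and> w {i, u} \<le> 1"
  shows "prob_ptw_le V K_adj w (V - {i}) t = 1 - (\<Prod>u\<in>V - {i}. 1 - w {i, u}) ^ t"
proof -
  let ?p = "wzf_run V K_adj w (V - {i}) t"
  have "(- {S. V \<subseteq> S}) \<inter> set_pmf ?p = {V - {i}} \<inter> set_pmf ?p"
    using set_pmf_wzf_run_K_adj_remove[OF assms(1)] assms(1) by auto
  then have "measure_pmf.prob ?p (- {S. V \<subseteq> S}) = pmf ?p (V - {i})"
    by (metis measure_Int_set_pmf measure_pmf_single)
  moreover have "measure_pmf.prob ?p (- {S. V \<subseteq> S}) = 1 - measure_pmf.prob ?p {S. V \<subseteq> S}"
    using measure_pmf.prob_compl[of "{S. V \<subseteq> S}" ?p] by (simp add: Compl_eq_Diff_UNIV)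
  ultimately show ?thesis
    unfolding prob_ptw_le_def using pmf_wzf_run_K_adj_remove[OF assms] by simp
qed

lemma prod_pos_less_1:
  fixes f :: "'a \<Rightarrow> real"
  assumes "finite A" "A \<noteq> {}" "\<And>x. x \<in> A \<Longrightarrow> 0 < f x \<and> f x < 1"
  shows "0 < prod f A \<and> prod f A < 1"
proof
  show "0 < prod f A" using assms(3) by (intro prod_pos) auto
  obtain a where "a \<in> A" using assms(2) by auto
  then have "prod f A < prod (\<lambda>_. 1) A"
    using assms by (intro prod_mono_strict[of a]) (auto simp: less_imp_le)
  then show "prod f A < 1" by simp
qed

lemma Least_one_minus_power_ge:
  fixes p \<alpha> :: real
  assumes "0 < p" "p < 1" "0 < \<alpha>" "\<alpha> < 1"
  shows "(LEAST t::nat. \<alpha> \<le> 1 - p ^ t) = nat \<lceil>log p (1 - \<alpha>)\<rceil>"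
proof (rule Least_equality)
  have ln_p: "ln p < 0" using assms by simp
  have iff: "\<alpha> \<le> 1 - p ^ t \<longleftrightarrow> nat \<lceil>log p (1 - \<alpha>)\<rceil> \<le> t" for t :: nat
  proof -
    have "\<alpha> \<le> 1 - p ^ t \<longleftrightarrow> ln (p ^ t) \<le> ln (1 - \<alpha>)"
      using assms by (subst ln_le_cancel_iff) auto
    also have "\<dots> \<longleftrightarrow> log p (1 - \<alpha>) \<le> real t"
      using ln_p assms(1) by (simp add: ln_realpow log_def neg_divide_le_eq)
    also have "\<dots> \<longleftrightarrow> nat \<lceil>log p (1 - \<alpha>)\<rceil> \<le> t"
      by (simp add: ceiling_le_iff nat_le_iff)
    finally show ?thesis .
  qed
  show "\<alpha> \<le> 1 - p ^ nat \<lceil>log p (1 - \<alpha>)\<rceil>" by (simp add: iff)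
  show "\<And>t. \<alpha> \<le> 1 - p ^ t \<Longrightarrow> nat \<lceil>log p (1 - \<alpha>)\<rceil> \<le> t" by (simp add: iff)
qed

lemma log_base_mono_below_1:
  fixes p q x :: real
  assumes "0 < p" "p \<le> q" "q < 1" "0 < x" "x < 1"
  shows "log p x \<le> log q x"
proof -
  have "- ln x / - ln p \<le> - ln x / - ln q"
    using assms by (intro divide_left_mono mult_pos_pos) auto
  then show ?thesis by (simp add: log_def)
qed

lemma mono_on_Min_commute:
  fixes f :: "'a::linorder \<Rightarrow> 'b::linorder"
  assumes "mono_on S f" "finite A" "A \<noteq> {}" "A \<subseteq> S"
  shows "f (Min A) = Min (f ` A)"
proof -
  have "Min A \<in> A" using assms(2,3) by simp
  moreover have "Min A \<in> S" using calculation assms(4) by blast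
  ultimately show ?thesis
    using assms by (intro Min_eqI[symmetric]) (auto intro!: mono_onD[OF assms(1)])
qed

lemma cptw_set_K_adj_remove:
  assumes "i \<in> V" "finite V" "V - {i} \<noteq> {}"
    and w: "\<And>u. u \<in> V - {i} \<Longrightarrow> 0 < w {i, u} \<and> w {i, u} < 1"
    and "0 < \<alpha>" "\<alpha> < 1"
  shows "cptw_set V K_adj w (V - {i}) \<alpha> = nat \<lceil>log (\<Prod>u\<in>V - {i}. 1 - w {i, u}) (1 - \<alpha>)\<rceil>"
proof -
  have "0 < (\<Prod>u\<in>V - {i}. 1 - w {i, u}) \<and> (\<Prod>u\<in>V - {i}. 1 - w {i, u}) < 1"
    using assms(2,3) w by (intro prod_pos_less_1) auto
  moreover have "\<forall>u\<in>V - {i}. 0 \<le> w {i, u} \<and> w {i, u} \<le> 1"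
    using w by (simp add: less_imp_le)
  ultimately show ?thesis
    unfolding cptw_set_def
    using prob_ptw_le_K_adj_remove[OF assms(1,2)] assms(5,6) by (simp add: Least_one_minus_power_ge)
qed

lemma cptw_K_adj:
  fixes w :: "nat set \<Rightarrow> real"
  assumes "finite V" "card V \<ge> 2"
    and w: "\<And>i j. i \<in> V \<Longrightarrow> j \<in> V \<Longrightarrow> i \<noteq> j \<Longrightarrow> 0 < w {i, j} \<and> w {i, j} < 1"
    and "0 < \<alpha>" "\<alpha> < 1"
  defines "P \<equiv> \<lambda>i. \<Prod>j\<in>V - {i}. 1 - w {i, j}"
  shows "cptw V K_adj w \<alpha> = nat \<lceil>log (Min (P ` V)) (1 - \<alpha>)\<rceil>"
proof -
  let ?c = "\<lambda>p. nat \<lceil>log p (1 - \<alpha>)\<rceil>"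
  note nonempty = Diff_singleton_nonempty_if_card_ge_2[OF assms(2)]
  have P_in: "P i \<in> {0<..<1}" if "i \<in> V" for i
  proof -
    have "0 < P i \<and> P i < 1"
      unfolding P_def using assms(1) nonempty by (intro prod_pos_less_1) (use w that in auto)
    then show ?thesis by simp
  qed
  have "mono_on {0<..<1} ?c"
    using assms(4,5) by (intro mono_onI nat_mono ceiling_mono log_base_mono_below_1) auto
  then have "?c (Min (P ` V)) = Min (?c ` P ` V)"
    using assms(1,2) P_in by (intro mono_on_Min_commute) auto
  also have "?c ` P ` V = (\<lambda>B. cptw_set V K_adj w B \<alpha>) ` (\<lambda>i. V - {i}) ` V"
    unfolding image_image P_def
    by (intro image_cong refl cptw_set_K_adj_remove[symmetric] assms(1,4,5) nonempty w) auto
  finally show ?thesis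
    unfolding cptw_def minimum_zero_forcing_sets_K_adj[OF assms(1,2), symmetric]
    by (simp add: setcompr_eq_image)
qed

theorem mainTheorem7:
  fixes n :: nat and w :: "nat set \<Rightarrow> real" and \<alpha> :: real
  assumes "n \<ge> 2"
    and "\<And>i j. i \<in> {1..n} \<Longrightarrow> j \<in> {1..n} \<Longrightarrow> i \<noteq> j \<Longrightarrow> 0 < w {i, j} \<and> w {i, j} < 1"
    and "0 < \<alpha>" and "\<alpha> < 1"
  shows "int (cptw {1..n} K_adj w \<alpha>) =
    \<lceil>log (Min ((\<lambda>i. \<Prod>j\<in>{1..n} - {i}. 1 - w {i, j}) ` {1..n})) (1 - \<alpha>)\<rceil>"
proof -
  let ?P = "\<lambda>i. \<Prod>j\<in>{1..n} - {i}. 1 - w {i, j}"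
  have "Min (?P ` {1..n}) \<in> ?P ` {1..n}"
    using assms(1) by (intro Min_in) auto
  then obtain i where i: "i \<in> {1..n}" "Min (?P ` {1..n}) = ?P i" by auto
  have "{1..n} - {i} \<noteq> {}"
    using assms(1) by (intro Diff_singleton_nonempty_if_card_ge_2) simp
  then have "0 < ?P i \<and> ?P i < 1"
    using assms(2) i(1) by (intro prod_pos_less_1) auto
  then have "0 < log (Min (?P ` {1..n})) (1 - \<alpha>)"
    using assms(3,4) i(2) by (simp add: log_def divide_neg_neg)
  moreover have "cptw {1..n} K_adj w \<alpha> = nat \<lceil>log (Min (?P ` {1..n})) (1 - \<alpha>)\<rceil>"
    by (rule cptw_K_adj) (use assms in auto)
  ultimately show ?thesis by simp
qed

end
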